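(* Let $J^A_{k,n}$ be the number of maximal configurations resistant to altruists of length $n$ with exactly $k$ occupied lots (the empty configuration of length $0$ being counted once). Then, as formal power series, $$\sum_{n\ge 0}\sum_{k\ge 0} J^A_{k,n}x^ky^n = \frac{1+xy+x^2y^2+x^2y^3+x^3y^4}{1-x^2y^3-x^2y^4-x^3y^5} = \frac{1+xy+x^2y^2+x^2y^3+x^3y^4}{(1-xy^2-x^2y^3)(1+xy^2)}.$$
   Context: A configuration of length $n\ge 0$ is a binary string $c_1c_2\cdots c_n$; $c_k=1$ means lot $k$ is occupied by a house, $c_k=0$ that it is empty. A house at position $k$ is blocked if $2\le k\le n-1$ and $c_{k-1}=c_{k+1}=1$ (lots beyond the ends never obstruct sunlight). A configuration is permissible if no house is blocked; maximal if it is permissible and, for every $k$ with $c_k=0$, setting $c_k=1$ yields a non-permissible string. A maximal configuration is resistant to altruists if, for every $k$ with $c_k=0$, setting $c_k=1$ makes some house at a position $l\neq k$ blocked. *)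

theory Defs
  imports "HOL-Computational_Algebra.Formal_Power_Series"
begin

(* A configuration of length n is a bool list c of length n; lot c k is c_k (1-indexed). *)
definition lot :: "bool list \<Rightarrow> nat \<Rightarrow> bool" where
  "lot c k = c ! (k - 1)"

definition blocked :: "bool list \<Rightarrow> nat \<Rightarrow> bool" where
  "blocked c k \<longleftrightarrow> 2 \<le> k \<and> k + 1 \<le> length c \<and> lot c k \<and> lot c (k - 1) \<and> lot c (k + 1)"

definition permissible :: "bool list \<Rightarrow> bool" where
  "permissible c \<longleftrightarrow> (\<forall>k\<in>{1..length c}. \<not> blocked c k)"

definition occupy :: "bool list \<Rightarrow> nat \<Rightarrow> bool list" where
  "occupy c k = c[k - 1 := True]"

definition maximal :: "bool list \<Rightarrow> bool" where
  "maximal c \<longleftrightarrow> permissible c \<and>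
     (\<forall>k\<in>{1..length c}. \<not> lot c k \<longrightarrow> \<not> permissible (occupy c k))"

definition resistant :: "bool list \<Rightarrow> bool" where
  "resistant c \<longleftrightarrow> maximal c \<and>
     (\<forall>k\<in>{1..length c}. \<not> lot c k \<longrightarrow>
        (\<exists>l\<in>{1..length c}. l \<noteq> k \<and> blocked (occupy c k) l))"

definition occupied :: "bool list \<Rightarrow> nat" where
  "occupied c = length (filter id c)"

definition JA :: "nat \<Rightarrow> nat \<Rightarrow> nat" where
  "JA k n = card {c. length c = n \<and> resistant c \<and> occupied c = k}"

(* Bivariate formal power series as power series in y with coefficients power series in x:
   coefficient of x^k y^n is G $ n $ k. *)
definition GF :: "real fps fps" where
  "GF = Abs_fps (\<lambda>n. Abs_fps (\<lambda>k. of_nat (JA k n)))"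

abbreviation xv :: "real fps fps" where "xv \<equiv> fps_const fps_X"
abbreviation yv :: "real fps fps" where "yv \<equiv> fps_X"

end

theory Submission
  imports Defs
begin

unbundle fps_syntax

(* A configuration is resistant exactly when it has no three consecutive houses and every
   empty lot has two houses directly to its left or two directly to its right: occupying the
   lot then blocks one of them.  Scanning from left to right, this is decided by remembering
   the last two lots and how many of the next lots must be houses.  Only five such states
   behave differently, and the generating functions of the words accepted from them satisfy
   a linear system whose solution is the stated rational function. *)

lemma blocked_iff_nth:
  "blocked c l \<longleftrightarrow> 2 \<le> l \<and> l < length c \<and> c ! (l - 2) \<and> c ! (l - 1) \<and> c ! l"
proof -
  have "2 \<le> l \<Longrightarrow> l + 1 - 1 = l \<and> l - 1 - 1 = l - 2" by auto
  then show ?thesis unfolding blocked_def lot_def by auto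
qed

lemma resistant_iff_altruists_block:
  "resistant c \<longleftrightarrow> permissible c \<and> (\<forall>k\<in>{1..length c}. \<not> lot c k \<longrightarrow>
     (\<exists>l\<in>{1..length c}. l \<noteq> k \<and> blocked (occupy c k) l))"
  unfolding resistant_def maximal_def permissible_def occupy_def by fastforce

definition no_three_in_row :: "bool list \<Rightarrow> bool" where
  "no_three_in_row c \<longleftrightarrow> (\<forall>i. i + 2 < length c \<longrightarrow> \<not> (c ! i \<and> c ! (i + 1) \<and> c ! (i + 2)))"

lemma permissible_iff_no_three_in_row: "permissible c \<longleftrightarrow> no_three_in_row c"
proof
  assume perm: "permissible c"
  show "no_three_in_row c" unfolding no_three_in_row_def
  proof (intro allI impI notI)
    fix i assume "i + 2 < length c" "c ! i \<and> c ! (i + 1) \<and> c ! (i + 2)"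
    then have "blocked c (i + 2)" "i + 2 \<in> {1..length c}" by (auto simp: blocked_iff_nth)
    then show False using perm unfolding permissible_def by blast
  qed
next
  assume no3: "no_three_in_row c"
  show "permissible c" unfolding permissible_def
  proof (intro ballI notI)
    fix k assume "blocked c k"
    then have "2 \<le> k" "k - 2 + 2 < length c" "c ! (k - 2)" "c ! (k - 2 + 1)" "c ! (k - 2 + 2)"
      by (auto simp: blocked_iff_nth Suc_diff_Suc numeral_2_eq_2)
    then show False using no3 unfolding no_three_in_row_def by blast
  qed
qed

text \<open>Lots are 0-indexed from here on: \<open>c ! j\<close> is the lot \<open>j + 1\<close> of the definitions.\<close>

definition sheltered :: "bool list \<Rightarrow> nat \<Rightarrow> bool" where
  "sheltered c j \<longleftrightarrow>
     (2 \<le> j \<and> c ! (j - 2) \<and> c ! (j - 1)) \<or> (j + 2 < length c \<and> c ! (j + 1) \<and> c ! (j + 2))"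

lemma occupy_blocks_other_iff_sheltered:
  assumes no3: "no_three_in_row c" and j: "j < length c" "\<not> c ! j"
  shows "(\<exists>l\<in>{1..length c}. l \<noteq> j + 1 \<and> blocked (c[j := True]) l) \<longleftrightarrow> sheltered c j"
proof
  assume "\<exists>l\<in>{1..length c}. l \<noteq> j + 1 \<and> blocked (c[j := True]) l"
  then obtain l where "l \<noteq> j + 1" and l: "2 \<le> l" "l < length c"
      "c[j := True] ! (l - 2)" "c[j := True] ! (l - 1)" "c[j := True] ! l"
    by (auto simp: blocked_iff_nth)
  then consider "j = l - 2" | "j = l" | "j \<noteq> l - 2" "j \<noteq> l - 1" "j \<noteq> l" by linarith
  then show "sheltered c j"
  proof cases
    case 1
    then have "j + 1 = l - 1" "j + 2 = l" using l by auto
    then show ?thesis using l j unfolding sheltered_def by auto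
  next
    case 2
    then show ?thesis using l j \<open>l \<noteq> j + 1\<close> unfolding sheltered_def by auto
  next
    case 3
    \<comment> \<open>the new house is not in the blocked triple, which then was already in \<open>c\<close>\<close>
    then have "c ! (l - 2) \<and> c ! (l - 2 + 1) \<and> c ! (l - 2 + 2)"
      using l by (auto simp: Suc_diff_Suc numeral_2_eq_2)
    moreover have "l - 2 + 2 < length c" using l by simp
    ultimately show ?thesis using no3 unfolding no_three_in_row_def by blast
  qed
next
  assume "sheltered c j"
  then consider "2 \<le> j" "c ! (j - 2)" "c ! (j - 1)" | "j + 2 < length c" "c ! (j + 1)" "c ! (j + 2)"
    unfolding sheltered_def by blast
  then show "\<exists>l\<in>{1..length c}. l \<noteq> j + 1 \<and> blocked (c[j := True]) l"
  proof cases
    case 1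
    then have "blocked (c[j := True]) j" "j \<in> {1..length c}" using j by (auto simp: blocked_iff_nth)
    then show ?thesis by (intro bexI[of _ j]) auto
  next
    case 2
    then have "blocked (c[j := True]) (j + 2)" using j by (auto simp: blocked_iff_nth)
    then show ?thesis using 2 by force
  qed
qed

definition gaps_sheltered_from :: "nat \<Rightarrow> bool list \<Rightarrow> bool" where
  "gaps_sheltered_from i c \<longleftrightarrow> (\<forall>j. i \<le> j \<longrightarrow> j < length c \<longrightarrow> \<not> c ! j \<longrightarrow> sheltered c j)"

lemma resistant_iff_sheltered:
  "resistant c \<longleftrightarrow> no_three_in_row c \<and> gaps_sheltered_from 0 c"
proof (cases "no_three_in_row c")
  case True
  have "k \<in> {1..length c} \<and> \<not> lot c k \<longleftrightarrow> k - 1 < length c \<and> \<not> c ! (k - 1) \<and> k = k - 1 + 1"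
    for k by (auto simp: lot_def)
  then have "(\<forall>k\<in>{1..length c}. \<not> lot c k \<longrightarrow>
        (\<exists>l\<in>{1..length c}. l \<noteq> k \<and> blocked (occupy c k) l)) \<longleftrightarrow> gaps_sheltered_from 0 c"
    using occupy_blocks_other_iff_sheltered[OF True]
    unfolding gaps_sheltered_from_def occupy_def
    by (metis Suc_eq_plus1 Suc_leI add_diff_cancel_right' atLeastAtMost_iff le0 le_add2)
  then show ?thesis using True by (simp add: resistant_iff_altruists_block permissible_iff_no_three_in_row)
next
  case False
  then show ?thesis by (simp add: resistant_iff_altruists_block permissible_iff_no_three_in_row)
qed

lemma all_nat_conv_0_Suc: "(\<forall>i::nat. P i) \<longleftrightarrow> P 0 \<and> (\<forall>i. P (Suc i))"
  by (metis not0_implies_Suc)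

lemma no_three_in_row_Cons:
  "no_three_in_row (a # c) \<longleftrightarrow> (2 \<le> length c \<longrightarrow> \<not> (a \<and> c ! 0 \<and> c ! 1)) \<and> no_three_in_row c"
  unfolding no_three_in_row_def by (subst all_nat_conv_0_Suc) (auto simp: numeral_2_eq_2)

lemma sheltered_Cons_Suc:
  "sheltered (a # c) (Suc j) \<longleftrightarrow> sheltered c j \<or> (j = 1 \<and> a \<and> c ! 0)"
  unfolding sheltered_def by (cases j) (auto simp: nth_Cons' numeral_2_eq_2)

lemma gaps_sheltered_from_Cons_Suc:
  assumes "2 \<le> i \<or> \<not> a"
  shows "gaps_sheltered_from (Suc i) (a # c) \<longleftrightarrow> gaps_sheltered_from i c"
  using assms unfolding gaps_sheltered_from_def
  by (auto simp: sheltered_Cons_Suc all_nat_conv_0_Suc[where P = "\<lambda>j. Suc i \<le> j \<longrightarrow> _ j"])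

lemma gaps_sheltered_from_Suc:
  "gaps_sheltered_from i c \<longleftrightarrow>
     (i < length c \<longrightarrow> \<not> c ! i \<longrightarrow> sheltered c i) \<and> gaps_sheltered_from (Suc i) c"
  unfolding gaps_sheltered_from_def by (metis Suc_le_eq le_eq_less_or_eq)

lemma gaps_sheltered_from_2_Cons:
  "gaps_sheltered_from 2 (p2 # p1 # b # w) \<longleftrightarrow>
     (\<not> b \<longrightarrow> p2 \<and> p1 \<or> take 2 w = [True, True]) \<and> gaps_sheltered_from 2 (p1 # b # w)"
proof -
  have "gaps_sheltered_from 2 (p2 # p1 # b # w) \<longleftrightarrow>
      (\<not> b \<longrightarrow> sheltered (p2 # p1 # b # w) 2) \<and> gaps_sheltered_from 3 (p2 # p1 # b # w)"
    by (simp add: gaps_sheltered_from_Suc[of 2] numeral_3_eq_3)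
  moreover have "sheltered (p2 # p1 # b # w) 2 \<longleftrightarrow> p2 \<and> p1 \<or> take 2 w = [True, True]"
    by (cases w rule: remdups_adj.cases) (auto simp: sheltered_def)
  moreover have "gaps_sheltered_from 3 (p2 # p1 # b # w) \<longleftrightarrow> gaps_sheltered_from 2 (p1 # b # w)"
    using gaps_sheltered_from_Cons_Suc[of 2] by simp
  ultimately show ?thesis by blast
qed

text \<open>A word \<open>w\<close> that may follow a prefix ending in the lots \<open>p2, p1\<close>, when the last empty lot
  of the prefix still needs the first \<open>d\<close> lots of \<open>w\<close> to be houses.\<close>

definition resistant_suffix :: "bool \<Rightarrow> bool \<Rightarrow> nat \<Rightarrow> bool list \<Rightarrow> bool" where
  "resistant_suffix p2 p1 d w \<longleftrightarrow> no_three_in_row (p2 # p1 # w) \<and>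
     gaps_sheltered_from 2 (p2 # p1 # w) \<and> take d w = replicate d True"

lemma resistant_iff_resistant_suffix: "resistant c \<longleftrightarrow> resistant_suffix False False 0 c"
  by (simp add: resistant_suffix_def resistant_iff_sheltered no_three_in_row_Cons
      gaps_sheltered_from_Cons_Suc numeral_2_eq_2)

lemma resistant_suffix_Nil: "resistant_suffix p2 p1 d [] \<longleftrightarrow> d = 0"
  by (auto simp: resistant_suffix_def no_three_in_row_def gaps_sheltered_from_def)

lemma resistant_suffix_Cons_True:
  "resistant_suffix p2 p1 d (True # w) \<longleftrightarrow> \<not> (p2 \<and> p1) \<and> resistant_suffix p1 True (d - 1) w"
  by (cases d) (auto simp: resistant_suffix_def gaps_sheltered_from_2_Cons no_three_in_row_Cons)

lemma resistant_suffix_Cons_False: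
  "resistant_suffix p2 p1 d (False # w) \<longleftrightarrow>
     d = 0 \<and> resistant_suffix p1 False (if p2 \<and> p1 then 0 else 2) w"
proof -
  have "replicate 2 True = [True, True]" by (simp add: numeral_2_eq_2)
  then show ?thesis
    by (cases d) (auto simp: resistant_suffix_def gaps_sheltered_from_2_Cons no_three_in_row_Cons)
qed

definition word_gf :: "(bool list \<Rightarrow> bool) \<Rightarrow> real fps fps" where
  "word_gf P = Abs_fps (\<lambda>n. Abs_fps (\<lambda>k. of_nat (card {w. length w = n \<and> occupied w = k \<and> P w})))"

lemma GF_eq_word_gf_resistant: "GF = word_gf resistant"
  unfolding GF_def word_gf_def JA_def by (simp add: conj_commute)

lemma word_gf_False: "word_gf (\<lambda>_. False) = 0"
  by (simp add: word_gf_def fps_zero_def)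

lemma occupied_Cons: "occupied (b # w) = (if b then Suc (occupied w) else occupied w)"
  by (simp add: occupied_def)

lemma word_gf_nth_0: "word_gf P $ 0 = (if P [] then 1 else 0)"
proof -
  have "{w. length w = 0 \<and> occupied w = k \<and> P w} = (if k = 0 \<and> P [] then {[]} else {})" for k
    by (auto simp: occupied_def)
  then show ?thesis by (intro fps_ext) (simp add: word_gf_def)
qed

lemma card_words_Suc:
  "card {w. length w = Suc n \<and> occupied w = k \<and> P w} =
     card {w. length w = n \<and> occupied w = k \<and> P (False # w)} +
     (if k = 0 then 0 else card {w. length w = n \<and> occupied w = k - 1 \<and> P (True # w)})"
proof -
  have fin: "finite {w. length w = n \<and> Q w}" for Q :: "bool list \<Rightarrow> bool"
    using finite_lists_length_eq[of "UNIV :: bool set" n] by (rule rev_finite_subset) auto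
  have disj: "Cons False ` A \<inter> Cons True ` B = {}" for A B :: "bool list set" by auto
  have "{w. length w = Suc n \<and> occupied w = k \<and> P w} =
      Cons False ` {w. length w = n \<and> occupied w = k \<and> P (False # w)} \<union>
      (if k = 0 then {} else Cons True ` {w. length w = n \<and> occupied w = k - 1 \<and> P (True # w)})"
  proof (intro set_eqI)
    fix w show "w \<in> {w. length w = Suc n \<and> occupied w = k \<and> P w} \<longleftrightarrow> w \<in>
      Cons False ` {w. length w = n \<and> occupied w = k \<and> P (False # w)} \<union>
      (if k = 0 then {} else Cons True ` {w. length w = n \<and> occupied w = k - 1 \<and> P (True # w)})"
      by (cases w) (auto simp: occupied_Cons)
  qed
  then show ?thesis by (simp add: card_Un_disjoint card_image fin disj)
qed

lemma word_gf_nth_Suc: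
  "word_gf P $ Suc n = word_gf (\<lambda>w. P (False # w)) $ n + fps_X * word_gf (\<lambda>w. P (True # w)) $ n"
  by (intro fps_ext) (simp add: word_gf_def card_words_Suc)

lemma word_gf_unfold:
  "word_gf P = (if P [] then 1 else 0) + yv * word_gf (\<lambda>w. P (False # w))
     + xv * yv * word_gf (\<lambda>w. P (True # w))"
proof (rule fps_ext)
  fix n
  show "word_gf P $ n = ((if P [] then 1 else 0) + yv * word_gf (\<lambda>w. P (False # w))
     + xv * yv * word_gf (\<lambda>w. P (True # w))) $ n"
    by (cases n) (simp_all add: word_gf_nth_0 word_gf_nth_Suc mult.assoc)
qed

lemma word_gf_resistant_suffix:
  "word_gf (resistant_suffix p2 p1 d) =
     (if d = 0 then 1 + yv * word_gf (resistant_suffix p1 False (if p2 \<and> p1 then 0 else 2)) else 0)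
     + (if p2 \<and> p1 then 0 else xv * yv * word_gf (resistant_suffix p1 True (d - 1)))"
  by (subst word_gf_unfold, cases "d = 0"; cases "p2 \<and> p1")
    (auto simp: resistant_suffix_Nil resistant_suffix_Cons_True resistant_suffix_Cons_False
      word_gf_False)

lemma word_gf_resistant_mult_denominator:
  "word_gf resistant * (1 - xv^2*yv^3 - xv^2*yv^4 - xv^3*yv^5)
     = 1 + xv*yv + xv^2*yv^2 + xv^2*yv^3 + xv^3*yv^4"
proof -
  define F where "F p2 p1 d = word_gf (resistant_suffix p2 p1 d)" for p2 p1 d
  have start: "word_gf resistant = F False False 0"
    unfolding F_def by (metis resistant_iff_resistant_suffix)
  have "F False False 0 = 1 + yv * F False False 2 + xv * yv * F False True 0"
    and "F False True 0 = 1 + yv * F True False 2 + xv * yv * F True True 0"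
    and "F False False 2 = xv * yv * F False True 1"
    and "F True False 2 = xv * yv * F False True 1"
    and "F False True 1 = xv * yv * F True True 0"
    and "F True True 0 = 1 + yv * F True False 0"
    and "F True False 0 = 1 + yv * F False False 2 + xv * yv * F False True 0"
    unfolding F_def by (subst word_gf_resistant_suffix; simp)+
  then show ?thesis unfolding start by algebra
qed

lemma fps_eq_mult_inverse:
  fixes f g h :: "'a::{comm_ring_1,inverse} fps"
  assumes "g * f = h" and "f $ 0 * inverse (f $ 0) = 1"
  shows "g = h * inverse f"
proof -
  have "f * inverse f = 1"
    using fps_right_inverse[OF assms(2)] by (simp add: fps_inverse_def)
  then show ?thesis using assms(1) by (metis mult.assoc mult_1_right)
qed

theorem mainTheorem5:
  shows "GF = (1 + xv*yv + xv^2*yv^2 + xv^2*yv^3 + xv^3*yv^4)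
              * inverse (1 - xv^2*yv^3 - xv^2*yv^4 - xv^3*yv^5)
       \<and> GF = (1 + xv*yv + xv^2*yv^2 + xv^2*yv^3 + xv^3*yv^4)
              * inverse ((1 - xv*yv^2 - xv^2*yv^3) * (1 + xv*yv^2))"
proof -
  let ?Q = "1 - xv^2*yv^3 - xv^2*yv^4 - xv^3*yv^5"
  have "?Q $ 0 * inverse (?Q $ 0) = 1" by (simp add: fps_mult_nth)
  then have "GF = (1 + xv*yv + xv^2*yv^2 + xv^2*yv^3 + xv^3*yv^4) * inverse ?Q"
    using fps_eq_mult_inverse word_gf_resistant_mult_denominator GF_eq_word_gf_resistant by metis
  moreover have "(1 - xv*yv^2 - xv^2*yv^3) * (1 + xv*yv^2) = ?Q"
    by (simp add: algebra_simps power2_eq_square power3_eq_cube eval_nat_numeral)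
  ultimately show ?thesis by simp
qed

end
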